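(* Let $\mathfrak{A}_q$ be a quantum cluster algebra with quantum seed $(\mathbf{x},B,\Lambda)$, $\mathbf{x}=(x_1,\ldots,x_n)$, assume that all prime ideals of $\mathfrak{A}_q$ are completely prime, and assume that the cluster $\mathbf{x}$ is super-toric. Let $\mathcal{I}$ be a torus invariant non-zero proper prime ideal of $\mathfrak{A}_q$ such that $\mathcal{I}\cap\mathbf{x}=\{x_{k+1},\ldots,x_n\}$. Then $\mathcal{I}\cap\mathbb{C}_\Lambda[x_1,\ldots,x_n]$ is generated by $\{x_{k+1},\ldots,x_n\}$.
   Context: A compatible pair $(B,\Lambda)$ consists of an $m\times n$ integer matrix $B$ ($m\le n$) with skew-symmetrizable principal $m\times m$ part and a skew-symmetric $n\times n$ integer matrix $\Lambda=(\lambda_{ij})$ such that $B\Lambda$ has entries $d_i\delta_{ij}$ with $d_i$ positive integers. In the quantum cluster algebra, the seed variables generate the quantum affine space $\mathbb{C}_\Lambda[x_1,\ldots,x_n]$ with relations $x_ix_j=q^{\lambda_{ij}}x_jx_i$, and $\mathfrak{A}_q\subset\mathbb{C}_\Lambda[x_1^{\pm1},\ldots,x_n^{\pm1}]$. Torus action: with $T=\ker(B)\subset\mathbb{Z}^n$, each $\mathbf{b}\in T$ and $\alpha\in\mathbb{C}^*$ give the global toric action $x_i\mapsto\alpha^{b_i}x_i$, acting on $\mathfrak{A}_q$ by automorphisms; torus invariant means stable under all of these. Super-toric: for $1\le k\le n$ let $T_{[1,k]}\subset\mathbb{Z}^k$ be the projection of $T$ onto the first $k$ coordinates and $\Lambda_{[1,k]}$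 the principal $k\times k$ submatrix of $\Lambda$; the cluster is super-toric if $\mathrm{rk}(T_{[1,k]}+\mathrm{Im}(\Lambda_{[1,k]}))=k$ for all $k=1,\ldots,n$. Completely prime: $ab\in\mathcal{I}\Rightarrow a\in\mathcal{I}$ or $b\in\mathcal{I}$. *)

theory Defs
  imports Complex_Main
begin

(* Indices are 0-based: the paper's x_1..x_n are xvar 0 .. xvar (n-1);
   mutable indices are 0..m-1, frozen ones m..n-1.
   t is a fixed square root of q (q = t^2), needed for quantum mutation. *)

type_synonym expo = "nat \<Rightarrow> int"
type_synonym qelt = "expo \<Rightarrow> complex"
type_synonym imat = "nat \<Rightarrow> nat \<Rightarrow> int"

definition compatible :: "nat \<Rightarrow> nat \<Rightarrow> imat \<Rightarrow> imat \<Rightarrow> bool" where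
  "compatible m n B L \<longleftrightarrow> m \<le> n
     \<and> (\<exists>d::nat \<Rightarrow> int. (\<forall>i<m. 0 < d i) \<and> (\<forall>i<m. \<forall>j<m. d i * B i j = - (d j * B j i)))
     \<and> (\<forall>i<n. \<forall>j<n. L i j = - L j i)
     \<and> (\<exists>d::nat \<Rightarrow> int. \<forall>i<m. 0 < d i \<and>
          (\<forall>j<n. (\<Sum>l<n. B i l * L l j) = (if i = j then d i else 0)))"

text \<open>An element is a coefficient function on exponent vectors; the basis element
  for exponent a is the ordered monomial x_1^{a_1} ... x_n^{a_n}.\<close>

definition qsupp :: "qelt \<Rightarrow> expo set" where
  "qsupp f = {a. f a \<noteq> 0}"

definition qtorus :: "nat \<Rightarrow> qelt set" where
  "qtorus n = {f. finite (qsupp f) \<and> (\<forall>a\<in>qsupp f. \<forall>j\<ge>n. a j = 0)}"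

definition qaffine :: "nat \<Rightarrow> qelt set" where
  "qaffine n = {f \<in> qtorus n. \<forall>a\<in>qsupp f. \<forall>j. 0 \<le> a j}"

definition sigma :: "nat \<Rightarrow> imat \<Rightarrow> expo \<Rightarrow> expo \<Rightarrow> int" where
  "sigma n L a b = (\<Sum>i<n. \<Sum>j<i. a i * L i j * b j)"

text \<open>X^a X^b = q^(sigma a b) X^(a+b), where q = t^2, since x_i x_j = q^(lambda_ij) x_j x_i.\<close>
definition qmult :: "nat \<Rightarrow> imat \<Rightarrow> complex \<Rightarrow> qelt \<Rightarrow> qelt \<Rightarrow> qelt" where
  "qmult n L t f g = (\<lambda>c. \<Sum>p\<in>{p \<in> qsupp f \<times> qsupp g. (\<lambda>i. fst p i + snd p i) = c}.
       f (fst p) * g (snd p) * t powi (2 * sigma n L (fst p) (snd p)))"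

definition qadd :: "qelt \<Rightarrow> qelt \<Rightarrow> qelt" where
  "qadd f g = (\<lambda>c. f c + g c)"

definition qscale :: "complex \<Rightarrow> qelt \<Rightarrow> qelt" where
  "qscale s f = (\<lambda>c. s * f c)"

definition qzero :: qelt where
  "qzero = (\<lambda>c. 0)"

definition qone :: qelt where
  "qone = (\<lambda>c. if c = (\<lambda>i. 0) then 1 else 0)"

definition xvar :: "nat \<Rightarrow> qelt" where
  "xvar i = (\<lambda>c. if c = (\<lambda>j. if j = i then 1 else 0) then 1 else 0)"

fun qpow :: "nat \<Rightarrow> imat \<Rightarrow> complex \<Rightarrow> qelt \<Rightarrow> nat \<Rightarrow> qelt" where
  "qpow n L t y 0 = qone"
| "qpow n L t y (Suc k) = qmult n L t y (qpow n L t y k)"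

definition qprod :: "nat \<Rightarrow> imat \<Rightarrow> complex \<Rightarrow> (nat \<Rightarrow> qelt) \<Rightarrow> expo \<Rightarrow> qelt" where
  "qprod n L t ys v = foldl (\<lambda>acc i. qmult n L t acc (qpow n L t (ys i) (nat (v i)))) qone [0..<n]"

type_synonym qseed = "(nat \<Rightarrow> qelt) \<times> imat \<times> imat"

definition mutB :: "imat \<Rightarrow> nat \<Rightarrow> imat" where
  "mutB B k = (\<lambda>i j. if i = k \<or> j = k then - B i j
                      else B i j + sgn (B i k) * max 0 (B i k * B k j))"

definition mutL :: "nat \<Rightarrow> imat \<Rightarrow> imat \<Rightarrow> nat \<Rightarrow> imat" where
  "mutL n B L k = (let E = (\<lambda>a j. if j \<noteq> k then (if a = j then 1 else 0)
                                   else if a = k then -1 else max 0 (- B k a))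
                    in (\<lambda>i j. \<Sum>a<n. \<Sum>c<n. E a i * L a c * E c j))"

text \<open>Weyl-ordered monomial M(v) = q^(-sigma'(v,v)/2) y^v of a seed (v \<ge> 0),
  computed inside the ambient quantum torus (with form L0).\<close>
definition wmon :: "nat \<Rightarrow> imat \<Rightarrow> complex \<Rightarrow> qseed \<Rightarrow> expo \<Rightarrow> qelt" where
  "wmon n L0 t s v = qscale (t powi (- sigma n (snd (snd s)) v v)) (qprod n L0 t (fst s) v)"

text \<open>Quantum exchange relation: the new variable y satisfies
  x_k y = q^(Lambda(e_k,b+)/2) M(b+) + q^(Lambda(e_k,b-)/2) M(b-),
  equivalently y = M(-e_k + b+) + M(-e_k + b-), b = k-th row of B.\<close>
definition newvar :: "nat \<Rightarrow> imat \<Rightarrow> complex \<Rightarrow> qseed \<Rightarrow> nat \<Rightarrow> qelt" where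
  "newvar n L0 t s k =
    (let ys = fst s; B = fst (snd s); L = snd (snd s);
         bp = (\<lambda>j. if j < n then max 0 (B k j) else 0);
         bm = (\<lambda>j. if j < n then max 0 (- B k j) else 0);
         rhs = qadd (qscale (t powi (\<Sum>j<n. L k j * bp j)) (wmon n L0 t s bp))
                    (qscale (t powi (\<Sum>j<n. L k j * bm j)) (wmon n L0 t s bm))
     in THE y. y \<in> qtorus n \<and> qmult n L0 t (ys k) y = rhs)"

definition mutate :: "nat \<Rightarrow> imat \<Rightarrow> complex \<Rightarrow> nat \<Rightarrow> qseed \<Rightarrow> qseed" where
  "mutate n L0 t k s =
     ((fst s)(k := newvar n L0 t s k), mutB (fst (snd s)) k, mutL n (fst (snd s)) (snd (snd s)) k)"

inductive_set seeds :: "nat \<Rightarrow> nat \<Rightarrow> imat \<Rightarrow> imat \<Rightarrow> complex \<Rightarrow> qseed set"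
  for m n B L t where
  init: "(xvar, B, L) \<in> seeds m n B L t"
| mut: "s \<in> seeds m n B L t \<Longrightarrow> k < m \<Longrightarrow> mutate n L t k s \<in> seeds m n B L t"

definition cluster_vars :: "nat \<Rightarrow> nat \<Rightarrow> imat \<Rightarrow> imat \<Rightarrow> complex \<Rightarrow> qelt set" where
  "cluster_vars m n B L t = {fst s i | s i. s \<in> seeds m n B L t \<and> i < n}"

inductive_set qgen :: "nat \<Rightarrow> imat \<Rightarrow> complex \<Rightarrow> qelt set \<Rightarrow> qelt set"
  for n L t S where
  one: "qone \<in> qgen n L t S"
| gen: "x \<in> S \<Longrightarrow> x \<in> qgen n L t S"
| add: "x \<in> qgen n L t S \<Longrightarrow> y \<in> qgen n L t S \<Longrightarrow> qadd x y \<in> qgen n L t S"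
| mult: "x \<in> qgen n L t S \<Longrightarrow> y \<in> qgen n L t S \<Longrightarrow> qmult n L t x y \<in> qgen n L t S"
| scale: "x \<in> qgen n L t S \<Longrightarrow> qscale c x \<in> qgen n L t S"

text \<open>The quantum cluster algebra A_q (frozen variables not inverted).\<close>
definition qca :: "nat \<Rightarrow> nat \<Rightarrow> imat \<Rightarrow> imat \<Rightarrow> complex \<Rightarrow> qelt set" where
  "qca m n B L t = qgen n L t (cluster_vars m n B L t)"

definition is_ideal :: "nat \<Rightarrow> imat \<Rightarrow> complex \<Rightarrow> qelt set \<Rightarrow> qelt set \<Rightarrow> bool" where
  "is_ideal n L t R I \<longleftrightarrow> I \<subseteq> R \<and> qzero \<in> I
     \<and> (\<forall>a\<in>I. \<forall>b\<in>I. qadd a b \<in> I)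
     \<and> (\<forall>a\<in>I. \<forall>r\<in>R. qmult n L t r a \<in> I \<and> qmult n L t a r \<in> I)"

definition prime_ideal :: "nat \<Rightarrow> imat \<Rightarrow> complex \<Rightarrow> qelt set \<Rightarrow> qelt set \<Rightarrow> bool" where
  "prime_ideal n L t R P \<longleftrightarrow> is_ideal n L t R P \<and> P \<noteq> R
     \<and> (\<forall>J K. is_ideal n L t R J \<longrightarrow> is_ideal n L t R K \<longrightarrow>
              (\<forall>a\<in>J. \<forall>b\<in>K. qmult n L t a b \<in> P) \<longrightarrow> J \<subseteq> P \<or> K \<subseteq> P)"

definition completely_prime :: "nat \<Rightarrow> imat \<Rightarrow> complex \<Rightarrow> qelt set \<Rightarrow> qelt set \<Rightarrow> bool" where
  "completely_prime n L t R P \<longleftrightarrow> is_ideal n L t R P \<and> P \<noteq> R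
     \<and> (\<forall>a\<in>R. \<forall>b\<in>R. qmult n L t a b \<in> P \<longrightarrow> a \<in> P \<or> b \<in> P)"

definition ideal_gen :: "nat \<Rightarrow> imat \<Rightarrow> complex \<Rightarrow> qelt set \<Rightarrow> qelt set \<Rightarrow> qelt set" where
  "ideal_gen n L t R S = \<Inter>{J. is_ideal n L t R J \<and> S \<subseteq> J}"

definition kerB :: "nat \<Rightarrow> nat \<Rightarrow> imat \<Rightarrow> expo set" where
  "kerB m n B = {b. (\<forall>j\<ge>n. b j = 0) \<and> (\<forall>i<m. (\<Sum>j<n. B i j * b j) = 0)}"

text \<open>x_i \<mapsto> alpha^(b_i) x_i, so X^a \<mapsto> alpha^(b.a) X^a.\<close>
definition toric_act :: "nat \<Rightarrow> expo \<Rightarrow> complex \<Rightarrow> qelt \<Rightarrow> qelt" where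
  "toric_act n b \<alpha> f = (\<lambda>a. \<alpha> powi (\<Sum>i<n. b i * a i) * f a)"

definition torus_invariant :: "nat \<Rightarrow> nat \<Rightarrow> imat \<Rightarrow> qelt set \<Rightarrow> bool" where
  "torus_invariant m n B I \<longleftrightarrow>
     (\<forall>b\<in>kerB m n B. \<forall>\<alpha>::complex. \<alpha> \<noteq> 0 \<longrightarrow> (\<forall>f\<in>I. toric_act n b \<alpha> f \<in> I))"

definition zindep :: "nat \<Rightarrow> expo list \<Rightarrow> bool" where
  "zindep k vs \<longleftrightarrow> (\<forall>c::nat \<Rightarrow> int.
      (\<forall>j<k. (\<Sum>i<length vs. c i * (vs ! i) j) = 0) \<longrightarrow> (\<forall>i<length vs. c i = 0))"

definition grp_rank :: "nat \<Rightarrow> expo set \<Rightarrow> nat" where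
  "grp_rank k H = (GREATEST r. \<exists>vs. length vs = r \<and> set vs \<subseteq> H \<and> zindep k vs)"

definition Tproj :: "nat \<Rightarrow> nat \<Rightarrow> imat \<Rightarrow> nat \<Rightarrow> expo set" where
  "Tproj m n B k = {(\<lambda>i. if i < k then b i else 0) | b. b \<in> kerB m n B}"

definition ImL :: "imat \<Rightarrow> nat \<Rightarrow> expo set" where
  "ImL L k = {(\<lambda>i. if i < k then (\<Sum>j<k. L i j * c j) else 0) | c. True}"

definition super_toric :: "nat \<Rightarrow> nat \<Rightarrow> imat \<Rightarrow> imat \<Rightarrow> bool" where
  "super_toric m n B L \<longleftrightarrow>
     (\<forall>k\<in>{1..n}. grp_rank k {(\<lambda>i. u i + v i) | u v. u \<in> Tproj m n B k \<and> v \<in> ImL L k} = k)"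

end

theory Submission
  imports Defs
begin

text \<open>
  A polynomial in \<open>\<I> \<inter> \<complex>\<^sub>\<Lambda>[x\<^sub>1, \<dots>, x\<^sub>n]\<close> splits into the part whose monomials involve one of
  \<open>x\<^sub>k\<^sub>+\<^sub>1, \<dots>, x\<^sub>n\<close>, which lies in the ideal these generate, and a part \<open>f \<in> \<I>\<close> lying in
  \<open>\<complex>\<^sub>\<Lambda>[x\<^sub>1, \<dots>, x\<^sub>k]\<close>; it suffices to show \<open>f = 0\<close>. Take a counterexample \<open>f\<close> of minimal
  support. Since \<open>\<I>\<close> is completely prime and contains none of \<open>x\<^sub>1, \<dots>, x\<^sub>k\<close>, it contains
  no monomial in them, so \<open>f\<close> has two distinct exponents \<open>a \<noteq> a'\<close>. The super-toric
  condition says exactly that the characters of the torus together with the commutation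
  weights \<open>c \<mapsto> \<Lambda>(e\<^sub>i, c)\<close>, \<open>i \<le> k\<close>, separate the points of \<open>\<nat>\<^sup>k\<close>. A separating torus
  character \<open>\<chi>\<close> gives \<open>\<chi>\<cdot>f - \<chi>(a) f \<in> \<I>\<close>; a separating commutation weight gives
  \<open>f x\<^sub>i - q\<^sup>-\<^sup>\<Lambda>\<^sup>(\<^sup>e\<^sub>i\<^sup>,\<^sup>a\<^sup>) x\<^sub>i f = h x\<^sub>i \<in> \<I>\<close>, hence \<open>h \<in> \<I>\<close> as \<open>x\<^sub>i \<notin> \<I>\<close>. Either way the term at
  \<open>a\<close> is killed while the one at \<open>a'\<close> survives (\<open>q\<close> is not a root of unity), contradicting
  minimality.
\<close>

definition mon :: "expo \<Rightarrow> qelt" where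
  "mon a = (\<lambda>c. if c = a then 1 else 0)"

definition unit_vec :: "nat \<Rightarrow> expo" where
  "unit_vec i = (\<lambda>j. if j = i then 1 else 0)"

lemma add_expo_eq_iff: "((\<lambda>i. x i + e i) = (c::expo)) = (x = (\<lambda>i. c i - e i))"
  by (auto simp: fun_eq_iff algebra_simps)

lemma add_expo_eq_iff': "((\<lambda>i. e i + x i) = (c::expo)) = (x = (\<lambda>i. c i - e i))"
  by (auto simp: fun_eq_iff algebra_simps)

lemma qmult_single_right:
  "qmult n L t f (\<lambda>c. if c = e then s else 0) =
   (\<lambda>c. f (\<lambda>i. c i - e i) * s * t powi (2 * sigma n L (\<lambda>i. c i - e i) e))"
proof
  fix c
  let ?P = "{p \<in> qsupp f \<times> qsupp (\<lambda>c. if c = e then s else 0). (\<lambda>i. fst p i + snd p i) = c}"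
  show "qmult n L t f (\<lambda>c. if c = e then s else 0) c =
     f (\<lambda>i. c i - e i) * s * t powi (2 * sigma n L (\<lambda>i. c i - e i) e)"
  proof (cases "s = 0 \<or> f (\<lambda>i. c i - e i) = 0")
    case True
    then have "?P = {}" by (auto simp: qsupp_def add_expo_eq_iff split: if_splits)
    then have "qmult n L t f (\<lambda>c. if c = e then s else 0) c = 0"
      unfolding qmult_def by (simp only: sum.empty)
    then show ?thesis using True by auto
  next
    case False
    then have "?P = {((\<lambda>i. c i - e i), e)}"
      by (auto simp: qsupp_def add_expo_eq_iff split: if_splits)
    then show ?thesis by (simp add: qmult_def)
  qed
qed

lemma qmult_single_left:
  "qmult n L t (\<lambda>c. if c = e then s else 0) f =
   (\<lambda>c. s * f (\<lambda>i. c i - e i) * t powi (2 * sigma n L e (\<lambda>i. c i - e i)))"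
proof
  fix c
  let ?P = "{p \<in> qsupp (\<lambda>c. if c = e then s else 0) \<times> qsupp f. (\<lambda>i. fst p i + snd p i) = c}"
  show "qmult n L t (\<lambda>c. if c = e then s else 0) f c =
     s * f (\<lambda>i. c i - e i) * t powi (2 * sigma n L e (\<lambda>i. c i - e i))"
  proof (cases "s = 0 \<or> f (\<lambda>i. c i - e i) = 0")
    case True
    then have "?P = {}" by (auto simp: qsupp_def add_expo_eq_iff' split: if_splits)
    then have "qmult n L t (\<lambda>c. if c = e then s else 0) f c = 0"
      unfolding qmult_def by (simp only: sum.empty)
    then show ?thesis using True by auto
  next
    case False
    then have "?P = {(e, (\<lambda>i. c i - e i))}"
      by (auto simp: qsupp_def add_expo_eq_iff' split: if_splits)
    then show ?thesis by (simp add: qmult_def)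
  qed
qed

lemma xvar_eq_mon: "xvar i = mon (unit_vec i)"
  by (simp add: xvar_def mon_def unit_vec_def)

lemma qone_eq_mon: "qone = mon (\<lambda>i. 0)"
  by (simp add: qone_def mon_def)

lemma qscale_mon: "qscale s (mon a) = (\<lambda>c. if c = a then s else 0)"
  by (auto simp: qscale_def mon_def)

lemma qmult_qone_scaled_left: "qmult n L t (qscale s qone) f = qscale s f"
  by (simp add: qone_eq_mon qscale_mon qmult_single_left sigma_def) (simp add: qscale_def)

lemma qmult_qone_right [simp]: "qmult n L t f qone = f"
  unfolding qone_def by (simp add: qmult_single_right sigma_def)

lemma qmult_mon_xvar:
  "qmult n L t (mon a) (xvar i) =
   qscale (t powi (2 * sigma n L a (unit_vec i))) (mon (\<lambda>j. a j + unit_vec i j))"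
proof -
  have "((\<lambda>j. c j - unit_vec i j) = a) = (c = (\<lambda>j. a j + unit_vec i j))" for c
    using add_expo_eq_iff[of a "unit_vec i" c] by auto
  then show ?thesis
    by (auto simp: xvar_eq_mon mon_def qmult_single_right qscale_def intro!: ext)
qed

lemma qscale_qscale: "qscale x (qscale y f) = qscale (x * y) f"
  by (simp add: qscale_def mult.assoc)

lemma qscale_1 [simp]: "qscale 1 f = f"
  by (simp add: qscale_def)

lemma mon_add_unit_vec:
  assumes "t \<noteq> 0"
  shows "mon (\<lambda>j. a j + unit_vec i j) =
    qscale (inverse (t powi (2 * sigma n L a (unit_vec i)))) (qmult n L t (mon a) (xvar i))"
  using assms by (simp add: qmult_mon_xvar qscale_qscale)

lemma restrict_qsupp: "(\<lambda>c. if c \<in> qsupp f then f c else 0) = f"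
  by (auto simp: qsupp_def)

lemma restrict_in_subspace:
  assumes "finite F" and "qzero \<in> S"
    and "\<And>x y. x \<in> S \<Longrightarrow> y \<in> S \<Longrightarrow> qadd x y \<in> S"
    and "\<And>s x. x \<in> S \<Longrightarrow> qscale s x \<in> S"
    and "\<And>a. a \<in> F \<Longrightarrow> mon a \<in> S"
  shows "(\<lambda>c. if c \<in> F then f c else 0) \<in> S"
  using assms(1,5)
proof (induction F rule: finite_induct)
  case empty
  then show ?case using assms(2) by (simp add: qzero_def)
next
  case (insert a F)
  have "(\<lambda>c. if c \<in> insert a F then f c else 0) =
        qadd (qscale (f a) (mon a)) (\<lambda>c. if c \<in> F then f c else 0)"
    using insert.hyps by (auto simp: qadd_def qscale_def mon_def)
  then show ?case using insert assms(3,4) by simp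
qed

definition aff_exp :: "nat \<Rightarrow> expo \<Rightarrow> bool" where
  "aff_exp k a \<longleftrightarrow> (\<forall>j. 0 \<le> a j) \<and> (\<forall>j\<ge>k. a j = 0)"

lemma aff_exp_mono: "aff_exp k a \<Longrightarrow> k \<le> n \<Longrightarrow> aff_exp n a"
  by (auto simp: aff_exp_def)

lemma aff_exp_induct [consumes 1, case_names zero step]:
  assumes "aff_exp k a"
    and zero: "P (\<lambda>i. 0)"
    and step: "\<And>a i. aff_exp k a \<Longrightarrow> i < k \<Longrightarrow> P a \<Longrightarrow> P (\<lambda>j. a j + unit_vec i j)"
  shows "P a"
proof -
  have "aff_exp k a \<Longrightarrow> (\<Sum>j<k. nat (a j)) = N \<Longrightarrow> P a" for N a
  proof (induction N arbitrary: a)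
    case 0
    have "a j = 0" for j
    proof (cases "j < k")
      case True
      then have "nat (a j) = 0" using 0 by (simp add: sum_eq_0_iff)
      then show ?thesis using 0 by (simp add: aff_exp_def) (metis antisym)
    qed (use 0 in \<open>simp add: aff_exp_def\<close>)
    then have "a = (\<lambda>i. 0)" by blast
    then show ?case using zero by simp
  next
    case (Suc N)
    then obtain i where i: "i < k" "a i > 0"
      by (metis (no_types, lifting) aff_exp_def nat_0_iff not_less sum.neutral lessThan_iff
          nat.distinct(1))
    define a' where "a' = (\<lambda>j. a j - unit_vec i j)"
    have "aff_exp k a'" using Suc.prems i by (auto simp: aff_exp_def a'_def unit_vec_def)
    moreover have "(\<Sum>j<k. nat (a j)) = (\<Sum>j<k. nat (a' j) + (if j = i then 1 else 0))"
      using i by (intro sum.cong) (auto simp: a'_def unit_vec_def)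
    then have "(\<Sum>j<k. nat (a' j)) = N" using Suc.prems i by (simp add: sum.distrib)
    ultimately have "P (\<lambda>j. a' j + unit_vec i j)" using Suc.IH step i by blast
    then show ?case by (simp add: a'_def)
  qed
  then show ?thesis using assms(1) by blast
qed

lemma qaffine_iff: "f \<in> qaffine n \<longleftrightarrow> finite (qsupp f) \<and> (\<forall>a\<in>qsupp f. aff_exp n a)"
  by (auto simp: qaffine_def qtorus_def aff_exp_def)

lemma qsupp_mon [simp]: "qsupp (mon a) = {a}"
  by (auto simp: qsupp_def mon_def)

lemma mon_in_qaffine: "aff_exp n a \<Longrightarrow> mon a \<in> qaffine n"
  by (simp add: qaffine_iff)

lemma qsupp_subset_in_qaffine: "f \<in> qaffine n \<Longrightarrow> qsupp g \<subseteq> qsupp f \<Longrightarrow> g \<in> qaffine n"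
  by (auto simp: qaffine_iff intro: finite_subset)

lemma qadd_in_qaffine: "f \<in> qaffine n \<Longrightarrow> g \<in> qaffine n \<Longrightarrow> qadd f g \<in> qaffine n"
proof -
  have "qsupp (qadd f g) \<subseteq> qsupp f \<union> qsupp g" by (auto simp: qsupp_def qadd_def)
  then show "f \<in> qaffine n \<Longrightarrow> g \<in> qaffine n \<Longrightarrow> qadd f g \<in> qaffine n"
    by (auto simp: qaffine_iff intro: finite_subset)
qed

lemma qaffine_mono:
  assumes "k \<le> n"
  shows "qaffine k \<subseteq> qaffine n"
  using aff_exp_mono[OF _ assms] by (auto simp: qaffine_iff)

lemma restrict_aff_exp_in_qaffine:
  assumes "f \<in> qaffine n"
  shows "(\<lambda>c. if aff_exp k c then f c else 0) \<in> qaffine k"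
proof -
  let ?g = "\<lambda>c. if aff_exp k c then f c else 0"
  have "qsupp ?g \<subseteq> qsupp f" by (auto simp: qsupp_def)
  then have "finite (qsupp ?g)" using assms by (simp add: qaffine_iff finite_subset)
  moreover have "\<forall>a\<in>qsupp ?g. aff_exp k a" by (simp add: qsupp_def)
  ultimately show ?thesis by (simp add: qaffine_iff)
qed

lemma restrict_in_qaffine: "f \<in> qaffine n \<Longrightarrow> (\<lambda>c. if c \<in> F then f c else 0) \<in> qaffine n"
  by (rule qsupp_subset_in_qaffine) (auto simp: qsupp_def)

lemma qsupp_qmult: "qsupp (qmult n L t f g) \<subseteq> (\<lambda>(x, y) i. x i + y i) ` (qsupp f \<times> qsupp g)"
proof
  fix c assume c: "c \<in> qsupp (qmult n L t f g)"
  have "{p \<in> qsupp f \<times> qsupp g. (\<lambda>i. fst p i + snd p i) = c} \<noteq> {}"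
  proof
    assume "{p \<in> qsupp f \<times> qsupp g. (\<lambda>i. fst p i + snd p i) = c} = {}"
    then have "qmult n L t f g c = 0" unfolding qmult_def by (simp only: sum.empty)
    then show False using c by (simp add: qsupp_def)
  qed
  then show "c \<in> (\<lambda>(x, y) i. x i + y i) ` (qsupp f \<times> qsupp g)" by force
qed

lemma qmult_in_qaffine: "f \<in> qaffine n \<Longrightarrow> g \<in> qaffine n \<Longrightarrow> qmult n L t f g \<in> qaffine n"
proof -
  assume f: "f \<in> qaffine n" and g: "g \<in> qaffine n"
  let ?S = "(\<lambda>(x, y) i. x i + y i) ` (qsupp f \<times> qsupp g)"
  have "finite ?S" using f g by (auto simp: qaffine_iff)
  moreover have "\<forall>c\<in>?S. aff_exp n c"
    using f g by (fastforce simp: qaffine_iff aff_exp_def)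
  ultimately show ?thesis using qsupp_qmult[of n L t f g]
    by (auto simp: qaffine_iff intro: finite_subset)
qed

lemma qscale_qone_in_qaffine: "qscale s qone \<in> qaffine n"
  by (simp add: qone_eq_mon qaffine_iff qscale_mon qsupp_def aff_exp_def)

lemma xvar_in_qaffine: "i < n \<Longrightarrow> xvar i \<in> qaffine n"
  by (simp add: xvar_eq_mon mon_in_qaffine aff_exp_def unit_vec_def)

lemma xvar_in_qca: "i < n \<Longrightarrow> xvar i \<in> qca m n B L t"
  unfolding qca_def cluster_vars_def using seeds.init[of B L m n t] by (force intro: qgen.gen)

lemma mon_in_qca:
  assumes "t \<noteq> 0" and "aff_exp n a"
  shows "mon a \<in> qca m n B L t"
  using assms(2)
proof (induction rule: aff_exp_induct)
  case zero
  then show ?case unfolding qca_def qone_eq_mon[symmetric] by (rule qgen.one)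
next
  case (step a i)
  then show ?case
    using xvar_in_qca[OF step(2)] mon_add_unit_vec[OF assms(1)]
    unfolding qca_def by (metis qgen.mult qgen.scale)
qed

lemma qaffine_subset_qca: "t \<noteq> 0 \<Longrightarrow> qaffine n \<subseteq> qca m n B L t"
proof
  fix f assume t: "t \<noteq> 0" and f: "f \<in> qaffine n"
  have "qzero = qscale 0 qone" by (simp add: qzero_def qscale_def)
  then have "qzero \<in> qca m n B L t" unfolding qca_def by (metis qgen.one qgen.scale)
  then show "f \<in> qca m n B L t"
    using restrict_in_subspace[of "qsupp f" "qca m n B L t" f] f mon_in_qca[OF t]
    unfolding qca_def by (auto simp: restrict_qsupp qaffine_iff intro: qgen.add qgen.scale)
qed

section \<open>Integer linear algebra\<close>

lemma int_linear_dependence: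
  fixes v :: "nat \<Rightarrow> expo"
  assumes "finite S" and "k < card S"
  shows "\<exists>c. (\<exists>i\<in>S. c i \<noteq> 0) \<and> (\<forall>j<k. (\<Sum>i\<in>S. c i * v i j) = 0)"
  using assms
proof (induction k arbitrary: S v)
  case 0
  then obtain i where "i \<in> S" by fastforce
  then show ?case by (rule_tac x="\<lambda>_. 1" in exI) auto
next
  case (Suc k)
  show ?case
  proof (cases "\<exists>p\<in>S. v p k \<noteq> 0")
    case False
    obtain c where c: "\<exists>i\<in>S. c i \<noteq> 0" "\<forall>j<k. (\<Sum>i\<in>S. c i * v i j) = 0"
      using Suc.IH[of S v] Suc.prems by auto
    then have "\<forall>j<Suc k. (\<Sum>i\<in>S. c i * v i j) = 0"
      using False by (auto simp: less_Suc_eq)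
    then show ?thesis using c by blast
  next
    case True
    then obtain p where p: "p \<in> S" "v p k \<noteq> 0" by blast
    \<comment> \<open>Gaussian elimination: clear the \<open>k\<close>-th coordinate using the pivot \<open>v p\<close>.\<close>
    define S' where "S' = S - {p}"
    define w where "w = (\<lambda>i j. v p k * v i j - v i k * v p j)"
    have "finite S'" "k < card S'" using Suc.prems p by (simp_all add: S'_def)
    then obtain c where c: "\<exists>i\<in>S'. c i \<noteq> 0" "\<forall>j<k. (\<Sum>i\<in>S'. c i * w i j) = 0"
      using Suc.IH by blast
    define d where "d = (\<lambda>i. if i = p then - (\<Sum>l\<in>S'. c l * v l k) else c i * v p k)"
    have key: "(\<Sum>i\<in>S. d i * v i j) = (\<Sum>i\<in>S'. c i * w i j)" for j
    proof -
      have "(\<Sum>i\<in>S. d i * v i j) = d p * v p j + (\<Sum>i\<in>S'. d i * v i j)"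
        using Suc.prems(1) p(1) unfolding S'_def by (simp add: sum.remove)
      also have "(\<Sum>i\<in>S'. d i * v i j) = (\<Sum>i\<in>S'. c i * v p k * v i j)"
        by (intro sum.cong) (auto simp: d_def S'_def)
      also have "d p * v p j = - (\<Sum>l\<in>S'. c l * v l k * v p j)"
        by (simp add: d_def sum_distrib_right)
      finally show ?thesis
        by (simp add: w_def right_diff_distrib sum_subtractf ac_simps)
    qed
    have "(\<Sum>i\<in>S. d i * v i j) = 0" if "j < Suc k" for j
    proof (cases "j = k")
      case True
      then show ?thesis using key by (simp add: w_def)
    next
      case False
      then show ?thesis using key c(2) that by simp
    qed
    moreover have "\<exists>i\<in>S. d i \<noteq> 0"
      using c(1) p(2) by (auto simp: d_def S'_def)
    ultimately show ?thesis by blast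
  qed
qed

lemma zindep_length_le: "zindep k vs \<Longrightarrow> length vs \<le> k"
proof (rule ccontr)
  assume "zindep k vs" and "\<not> length vs \<le> k"
  then obtain c where "\<exists>i<length vs. c i \<noteq> 0" "\<forall>j<k. (\<Sum>i<length vs. c i * (vs ! i) j) = 0"
    using int_linear_dependence[of "{..<length vs}" k "\<lambda>i. vs ! i"] by auto
  with \<open>zindep k vs\<close> show False unfolding zindep_def by blast
qed

lemma grp_rank_obtain_zindep:
  assumes "grp_rank k H = k"
  obtains vs where "length vs = k" "set vs \<subseteq> H" "zindep k vs"
proof -
  define P where "P = (\<lambda>r. \<exists>vs. length vs = r \<and> set vs \<subseteq> H \<and> zindep k vs)"
  have "P 0" by (simp add: P_def zindep_def)
  moreover have "P r \<Longrightarrow> r \<le> k" for r using zindep_length_le by (auto simp: P_def)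
  ultimately have "P (grp_rank k H)"
    unfolding grp_rank_def P_def[symmetric] by (rule GreatestI_nat)
  then show ?thesis using assms that by (auto simp: P_def)
qed

lemma orthogonal_full_rank_eq_0:
  assumes rank: "grp_rank k H = k" and orth: "\<And>w. w \<in> H \<Longrightarrow> (\<Sum>j<k. w j * d j) = 0"
    and "j0 < k"
  shows "d j0 = 0"
proof (rule ccontr)
  assume dj0: "d j0 \<noteq> 0"
  obtain vs where vs: "length vs = k" "set vs \<subseteq> H" "zindep k vs"
    using grp_rank_obtain_zindep[OF rank] .
  define v where "v = (\<lambda>i. if i < k then vs ! i else d)"
  obtain c where c: "\<exists>i\<in>{..<Suc k}. c i \<noteq> 0" "\<forall>j<k. (\<Sum>i<Suc k. c i * v i j) = 0"
    using int_linear_dependence[of "{..<Suc k}" k v] by auto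
  have vH: "(\<Sum>j<k. v i j * d j) = 0" if "i < k" for i
    using orth vs(1,2) that by (simp add: v_def nth_mem subset_iff)
  \<comment> \<open>Pairing the dependence with \<open>d\<close> leaves only \<open>c k \<cdot> |d|\<^sup>2\<close>.\<close>
  have "0 = (\<Sum>j<k. d j * (\<Sum>i<Suc k. c i * v i j))" using c(2) by simp
  also have "\<dots> = (\<Sum>j<k. \<Sum>i<Suc k. c i * (v i j * d j))"
    by (rule sum.cong[OF refl]) (simp only: sum_distrib_left ac_simps)
  also have "\<dots> = (\<Sum>i<Suc k. c i * (\<Sum>j<k. v i j * d j))"
    by (subst sum.swap) (simp add: sum_distrib_left)
  also have "\<dots> = c k * (\<Sum>j<k. d j * d j)"
    using vH by (simp add: v_def)
  finally have "c k * (\<Sum>j<k. d j * d j) = 0" by simp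
  moreover have "0 < d j0 * d j0" using dj0 by (auto simp: zero_less_mult_iff linorder_neq_iff)
  moreover have "d j0 * d j0 \<le> (\<Sum>j<k. d j * d j)"
    by (rule member_le_sum) (use \<open>j0 < k\<close> in auto)
  ultimately have ck: "c k = 0" by auto
  then have "\<forall>j<k. (\<Sum>i<length vs. c i * (vs ! i) j) = 0"
    using c(2) vs(1) by (simp add: v_def)
  then have "\<forall>i<k. c i = 0" using vs unfolding zindep_def by auto
  with ck c(1) show False by (auto simp: less_Suc_eq)
qed

section \<open>Super-toric clusters separate exponents\<close>

lemma sum_lessThan_truncate:
  fixes d :: expo
  assumes "k \<le> n" and "\<forall>j\<ge>k. d j = 0"
  shows "(\<Sum>j<n. g j * d j) = (\<Sum>j<k. g j * d j)"
  by (rule sum.mono_neutral_right) (use assms in auto)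

lemma super_toric_separates:
  assumes skew: "\<forall>i<n. \<forall>j<n. L i j = - L j i" and st: "super_toric m n B L" and kn: "k \<le> n"
    and d: "\<forall>j\<ge>k. d j = 0" and "d \<noteq> (\<lambda>j. 0)"
  shows "(\<exists>b\<in>kerB m n B. (\<Sum>j<n. b j * d j) \<noteq> 0) \<or> (\<exists>i<k. (\<Sum>j<n. L i j * d j) \<noteq> 0)"
proof (rule ccontr)
  assume "\<not> ?thesis"
  then have oT: "\<And>b. b \<in> kerB m n B \<Longrightarrow> (\<Sum>j<k. b j * d j) = 0"
    and oL: "\<And>i. i < k \<Longrightarrow> (\<Sum>j<k. L i j * d j) = 0"
    by (simp_all add: sum_lessThan_truncate[OF kn d])
  obtain j0 where "d j0 \<noteq> 0" using \<open>d \<noteq> (\<lambda>j. 0)\<close> by auto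
  with d have j0: "j0 < k" by (meson not_less)
  define H where "H = {(\<lambda>i. u i + v i) | u v. u \<in> Tproj m n B k \<and> v \<in> ImL L k}"
  have "(\<Sum>j<k. w j * d j) = 0" if "w \<in> H" for w
  proof -
    obtain b c where b: "b \<in> kerB m n B" and
      w: "w = (\<lambda>i. (if i < k then b i else 0) + (if i < k then (\<Sum>l<k. L i l * c l) else 0))"
      using \<open>w \<in> H\<close> unfolding H_def Tproj_def ImL_def by blast
    \<comment> \<open>By skew-symmetry, \<open>\<Lambda>\<^sub>[\<^sub>1\<^sub>,\<^sub>k\<^sub>]c \<cdot> d = - c \<cdot> \<Lambda>\<^sub>[\<^sub>1\<^sub>,\<^sub>k\<^sub>]d\<close>.\<close>
    have "(\<Sum>j<k. (\<Sum>l<k. L j l * c l) * d j) = (\<Sum>j<k. \<Sum>l<k. L j l * c l * d j)"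
      by (simp add: sum_distrib_right)
    also have "\<dots> = (\<Sum>l<k. \<Sum>j<k. L j l * c l * d j)"
      by (rule sum.swap)
    also have "\<dots> = (\<Sum>l<k. - c l * (\<Sum>j<k. L l j * d j))"
    proof (intro sum.cong refl)
      fix l assume l: "l \<in> {..<k}"
      have "(\<Sum>j<k. L j l * c l * d j) = (\<Sum>j<k. - c l * (L l j * d j))"
      proof (intro sum.cong refl)
        fix j assume "j \<in> {..<k}"
        then have "j < n" "l < n" using kn l by auto
        then have "L j l = - L l j" using skew by blast
        then show "L j l * c l * d j = - c l * (L l j * d j)" by simp
      qed
      then show "(\<Sum>j<k. L j l * c l * d j) = - c l * (\<Sum>j<k. L l j * d j)"
        by (simp add: sum_distrib_left)
    qed
    also have "\<dots> = 0" using oL by simp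
    finally have "(\<Sum>j<k. (\<Sum>l<k. L j l * c l) * d j) = 0" .
    then show ?thesis using oT[OF b] by (simp add: w distrib_right sum.distrib)
  qed
  moreover have "k \<in> {1..n}" using j0 kn by auto
  then have "grp_rank k H = k" using st unfolding super_toric_def H_def by blast
  ultimately have "d j0 = 0" using orthogonal_full_rank_eq_0 j0 by blast
  with \<open>d j0 \<noteq> 0\<close> show False ..
qed

lemma ideal_qadd: "is_ideal n L t R J \<Longrightarrow> x \<in> J \<Longrightarrow> y \<in> J \<Longrightarrow> qadd x y \<in> J"
  unfolding is_ideal_def by blast

lemma ideal_qmult_left: "is_ideal n L t R J \<Longrightarrow> r \<in> R \<Longrightarrow> y \<in> J \<Longrightarrow> qmult n L t r y \<in> J"
  unfolding is_ideal_def by blast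

lemma ideal_qmult_right: "is_ideal n L t R J \<Longrightarrow> r \<in> R \<Longrightarrow> y \<in> J \<Longrightarrow> qmult n L t y r \<in> J"
  unfolding is_ideal_def by blast

lemma ideal_qscale: "is_ideal n L t R J \<Longrightarrow> qscale s qone \<in> R \<Longrightarrow> y \<in> J \<Longrightarrow> qscale s y \<in> J"
  unfolding is_ideal_def by (metis qmult_qone_scaled_left)

lemma qscale_qone_in_qca: "qscale s qone \<in> qca m n B L t"
  unfolding qca_def by (intro qgen.scale qgen.one)

lemma ideal_qca_qscale: "is_ideal n L t (qca m n B L t) J \<Longrightarrow> y \<in> J \<Longrightarrow> qscale s y \<in> J"
  using ideal_qscale qscale_qone_in_qca by blast

lemma ideal_Int_qaffine:
  assumes "t \<noteq> 0" and "is_ideal n L t (qca m n B L t) I"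
  shows "is_ideal n L t (qaffine n) (I \<inter> qaffine n)"
  unfolding is_ideal_def
proof (intro conjI ballI)
  show "qzero \<in> I \<inter> qaffine n"
    using assms(2) by (simp add: is_ideal_def qaffine_iff qsupp_def qzero_def)
next
  fix a b assume "a \<in> I \<inter> qaffine n" "b \<in> I \<inter> qaffine n"
  then show "qadd a b \<in> I \<inter> qaffine n"
    using ideal_qadd[OF assms(2)] qadd_in_qaffine by blast
next
  fix a r assume a: "a \<in> I \<inter> qaffine n" and r: "r \<in> qaffine n"
  then have "r \<in> qca m n B L t" using qaffine_subset_qca[OF assms(1)] by blast
  then show "qmult n L t r a \<in> I \<inter> qaffine n" "qmult n L t a r \<in> I \<inter> qaffine n"
    using a r ideal_qmult_left[OF assms(2)] ideal_qmult_right[OF assms(2)] qmult_in_qaffine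
    by blast+
qed simp

lemma mem_ideal_genI: "(\<And>J. is_ideal n L t R J \<Longrightarrow> S \<subseteq> J \<Longrightarrow> f \<in> J) \<Longrightarrow> f \<in> ideal_gen n L t R S"
  unfolding ideal_gen_def by blast

lemma ideal_gen_least: "is_ideal n L t R J \<Longrightarrow> S \<subseteq> J \<Longrightarrow> ideal_gen n L t R S \<subseteq> J"
  unfolding ideal_gen_def by blast

lemma divisible_poly_mem_ideal:
  assumes J: "is_ideal n L t (qaffine n) J" and gens: "xvar ` {k..<n} \<subseteq> J"
    and t: "t \<noteq> 0" and f: "f \<in> qaffine n" and divisible: "\<forall>a\<in>qsupp f. \<not> aff_exp k a"
  shows "f \<in> J"
proof -
  have "mon a \<in> J" if a: "a \<in> qsupp f" for a
  proof -
    have an: "aff_exp n a" using f a by (simp add: qaffine_iff)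
    obtain j where j: "k \<le> j" "a j \<noteq> 0" using divisible an a by (auto simp: aff_exp_def)
    have "j < n" using j an by (meson aff_exp_def not_less)
    have "a j > 0" using j an by (simp add: aff_exp_def order_le_neq_trans)
    define a' where "a' = (\<lambda>i. a i - unit_vec j i)"
    have "aff_exp n a'"
      using an \<open>a j > 0\<close> \<open>j < n\<close> by (auto simp: aff_exp_def a'_def unit_vec_def)
    moreover have "xvar j \<in> J" using gens j \<open>j < n\<close> by auto
    ultimately have "qmult n L t (mon a') (xvar j) \<in> J"
      by (rule ideal_qmult_left[OF J mon_in_qaffine])
    then show ?thesis
      using mon_add_unit_vec[OF t, of a' j n L] ideal_qscale[OF J qscale_qone_in_qaffine]
      by (simp add: a'_def)
  qed
  moreover have "qzero \<in> J" using J by (simp add: is_ideal_def)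
  ultimately show ?thesis
    using restrict_in_subspace[of "qsupp f" J f] f ideal_qadd[OF J]
      ideal_qscale[OF J qscale_qone_in_qaffine]
    by (simp add: restrict_qsupp qaffine_iff)
qed

lemma sigma_unit_vec_right: "sigma n L x (unit_vec i) = (\<Sum>p<n. if i < p then x p * L p i else 0)"
proof -
  have "(\<Sum>j<p. x p * L p j * unit_vec i j) = (if i < p then x p * L p i else 0)" for p
  proof -
    have "(\<Sum>j<p. x p * L p j * unit_vec i j) = (\<Sum>j<p. if j = i then x p * L p j else 0)"
      by (intro sum.cong) (auto simp: unit_vec_def)
    then show ?thesis by (simp add: sum.delta)
  qed
  then show ?thesis by (simp add: sigma_def)
qed

lemma sigma_unit_vec_left:
  assumes "i < n"
  shows "sigma n L (unit_vec i) x = (\<Sum>j<n. if j < i then L i j * x j else 0)"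
proof -
  have "sigma n L (unit_vec i) x = (\<Sum>p<n. if p = i then (\<Sum>j<p. L p j * x j) else 0)"
    unfolding sigma_def by (intro sum.cong) (auto simp: unit_vec_def)
  also have "\<dots> = (\<Sum>j<i. L i j * x j)" using assms by (simp add: sum.delta)
  also have "\<dots> = (\<Sum>j\<in>{j\<in>{..<n}. j < i}. L i j * x j)"
    using assms by (intro sum.cong) auto
  also have "\<dots> = (\<Sum>j<n. if j < i then L i j * x j else 0)" by (rule sum.inter_filter) simp
  finally show ?thesis .
qed

lemma sigma_commute_unit_vec:
  assumes skew: "\<forall>i<n. \<forall>j<n. L i j = - L j i" and i: "i < n"
  shows "sigma n L x (unit_vec i) - sigma n L (unit_vec i) x = - (\<Sum>j<n. L i j * x j)"
proof -
  have "sigma n L x (unit_vec i) - sigma n L (unit_vec i) x =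
        (\<Sum>p<n. (if i < p then x p * L p i else 0) - (if p < i then L i p * x p else 0))"
    unfolding sigma_unit_vec_right sigma_unit_vec_left[OF i] by (rule sum_subtractf[symmetric])
  also have "\<dots> = (\<Sum>p<n. - (L i p * x p))"
  proof (intro sum.cong refl)
    fix p assume "p \<in> {..<n}"
    then have "L p i = - L i p" using skew i by blast
    moreover have "L i i = - L i i" using skew i by blast
    ultimately have "L p i = - L i p" "L i i = 0" by simp_all
    then show "(if i < p then x p * L p i else 0) - (if p < i then L i p * x p else 0) = - (L i p * x p)"
      by (cases i p rule: linorder_cases) auto
  qed
  finally show ?thesis by (simp add: sum_negf)
qed

lemma powi_double_ne_1:
  fixes t :: complex
  assumes t: "t \<noteq> 0" and q: "\<forall>N::nat. 0 < N \<longrightarrow> (t ^ 2) ^ N \<noteq> 1" and N: "N \<noteq> 0"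
  shows "t powi (2 * N) \<noteq> 1"
proof -
  have e: "t powi (2 * N) = (t ^ 2) powi N" by (simp add: power_int_mult)
  show ?thesis
  proof (cases "N > 0")
    case True
    then show ?thesis using e q by (simp add: power_int_nonneg_exp)
  next
    case False
    then have "(t ^ 2) ^ nat (- N) \<noteq> 1" using q N by simp
    moreover have "(t ^ 2) powi N = inverse ((t ^ 2) powi (- N))"
      by (simp add: power_int_minus[symmetric])
    moreover have "(t ^ 2) powi (- N) = (t ^ 2) ^ nat (- N)"
      using False by (simp add: power_int_nonneg_exp)
    ultimately show ?thesis using e by (metis inverse_1 inverse_inverse_eq)
  qed
qed

lemma two_powi_inj: "(2::complex) powi x = 2 powi y \<Longrightarrow> x = y"
proof -
  assume "(2::complex) powi x = 2 powi y"
  then have "of_real ((2::real) powi x) = (of_real ((2::real) powi y) :: complex)"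
    by (metis of_real_numeral of_real_power_int)
  then have "(2::real) powi x = 2 powi y" by (rule of_real_eq_iff[THEN iffD1])
  then show "x = y"
    using power_int_strict_increasing[of _ _ "2::real"]
    by (metis linorder_neq_iff less_irrefl one_less_numeral_iff semiring_norm(76))
qed

section \<open>Torus invariant completely prime ideals\<close>

lemma torus_invariant_isolate:
  assumes ideal: "is_ideal n L t (qca m n B L t) I" and inv: "torus_invariant m n B I"
    and b: "b \<in> kerB m n B" and f: "f \<in> I"
  obtains g where "g \<in> I" "qsupp g = {c \<in> qsupp f. (\<Sum>i<n. b i * c i) \<noteq> (\<Sum>i<n. b i * a i)}"
proof -
  define w where "w = (\<lambda>c. \<Sum>i<n. b i * c i)"
  \<comment> \<open>Acting with \<open>\<alpha> = 2\<close> suffices: its powers are pairwise distinct.\<close>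
  define g where "g = qadd (toric_act n b 2 f) (qscale (- ((2::complex) powi w a)) f)"
  have "g \<in> I"
    using inv b f ideal_qadd[OF ideal] ideal_qca_qscale[OF ideal]
    unfolding g_def torus_invariant_def by simp
  moreover have "g c = (2 powi w c - 2 powi w a) * f c" for c
    by (simp add: g_def qadd_def toric_act_def qscale_def w_def algebra_simps)
  then have "qsupp g = {c \<in> qsupp f. w c \<noteq> w a}"
    by (auto simp: qsupp_def dest: two_powi_inj)
  ultimately show thesis using that by (simp add: w_def)
qed

context
  fixes m n k :: nat and B L :: imat and t :: complex and I :: "qelt set"
  assumes t: "t \<noteq> 0" and not_root_of_unity: "\<forall>N::nat. 0 < N \<longrightarrow> (t ^ 2) ^ N \<noteq> 1"
    and ideal: "is_ideal n L t (qca m n B L t) I" and proper: "I \<noteq> qca m n B L t"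
    and completely_prime:
      "\<forall>a\<in>qca m n B L t. \<forall>b\<in>qca m n B L t. qmult n L t a b \<in> I \<longrightarrow> a \<in> I \<or> b \<in> I"
    and k_le_n: "k \<le> n" and xvar_notin: "\<forall>i<k. xvar i \<notin> I"
    and skew: "\<forall>i<n. \<forall>j<n. L i j = - L j i" and super_toric: "super_toric m n B L"
    and torus_inv: "torus_invariant m n B I"
begin

lemma mon_notin_ideal: "aff_exp k a \<Longrightarrow> mon a \<notin> I"
proof (induction rule: aff_exp_induct)
  case zero
  show ?case
  proof
    assume "mon (\<lambda>i. 0) \<in> I"
    then have "qone \<in> I" by (simp add: qone_eq_mon)
    then have "r \<in> I" if "r \<in> qca m n B L t" for r
      using ideal_qmult_left[OF ideal that] by fastforce
    then show False using proper ideal by (auto simp: is_ideal_def)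
  qed
next
  case (step a i)
  show ?case
  proof
    assume "mon (\<lambda>j. a j + unit_vec i j) \<in> I"
    then have "qmult n L t (mon a) (xvar i) \<in> I"
      by (simp add: qmult_mon_xvar ideal_qca_qscale[OF ideal])
    moreover have "mon a \<in> qca m n B L t"
      using mon_in_qca[OF t aff_exp_mono[OF step(1) k_le_n]] .
    moreover have "xvar i \<in> qca m n B L t" using xvar_in_qca step(2) k_le_n by simp
    ultimately show False using completely_prime step(2,3) xvar_notin by blast
  qed
qed

lemma commutator_isolate:
  assumes i: "i < k" and f: "f \<in> I" "f \<in> qaffine n"
  obtains h where "h \<in> I" "qsupp h = {c \<in> qsupp f. (\<Sum>j<n. L i j * c j) \<noteq> (\<Sum>j<n. L i j * a j)}"
proof -
  have "i < n" using i k_le_n by simp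
  define w where "w = (\<lambda>c. \<Sum>j<n. L i j * c j)"
  define h where "h = (\<lambda>c. f c * (1 - t powi (2 * (w c - w a))))"
  define g where
    "g = qadd (qmult n L t f (xvar i)) (qscale (- (t powi (- 2 * w a))) (qmult n L t (xvar i) f))"
  have "g \<in> I" unfolding g_def
    using ideal_qadd[OF ideal] ideal_qmult_left[OF ideal] ideal_qmult_right[OF ideal]
      xvar_in_qca[OF \<open>i < n\<close>] f(1) ideal_qca_qscale[OF ideal] by simp
  \<comment> \<open>\<open>h x\<^sub>i = f x\<^sub>i - q\<^sup>-\<^sup>w\<^sup>(\<^sup>a\<^sup>) x\<^sub>i f\<close>, since \<open>X\<^sup>d x\<^sub>i = q\<^sup>-\<^sup>w\<^sup>(\<^sup>d\<^sup>) x\<^sub>i X\<^sup>d\<close>.\<close>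
  moreover have "qmult n L t h (xvar i) = g"
  proof
    fix c
    define d where "d = (\<lambda>j. c j - unit_vec i j)"
    have exponent:
      "2 * (w d - w a) + 2 * sigma n L d (unit_vec i) = - 2 * w a + 2 * sigma n L (unit_vec i) d"
      using sigma_commute_unit_vec[OF skew \<open>i < n\<close>, of d] by (simp add: w_def)
    have "t powi (2 * (w d - w a)) * t powi (2 * sigma n L d (unit_vec i)) =
          t powi (2 * (w d - w a) + 2 * sigma n L d (unit_vec i))"
      by (rule power_int_add[symmetric]) (simp add: t)
    also have "\<dots> = t powi (- 2 * w a + 2 * sigma n L (unit_vec i) d)"
      by (simp only: exponent)
    also have "\<dots> = t powi (- 2 * w a) * t powi (2 * sigma n L (unit_vec i) d)"
      by (rule power_int_add) (simp add: t)
    finally have "t powi (2 * (w d - w a)) * t powi (2 * sigma n L d (unit_vec i)) =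
                  t powi (- 2 * w a) * t powi (2 * sigma n L (unit_vec i) d)" .
    then show "qmult n L t h (xvar i) c = g c"
      by (simp add: xvar_eq_mon mon_def qmult_single_right qmult_single_left g_def qadd_def
          qscale_def h_def d_def[symmetric] algebra_simps)
  qed
  moreover have "qsupp h \<subseteq> qsupp f" by (auto simp: qsupp_def h_def)
  then have "h \<in> qca m n B L t"
    using qaffine_subset_qca[OF t] qsupp_subset_in_qaffine[OF f(2)] by blast
  ultimately have "h \<in> I"
    using completely_prime xvar_in_qca[OF \<open>i < n\<close>] xvar_notin i by metis
  moreover have "t powi (2 * (w c - w a)) = 1 \<longleftrightarrow> w c = w a" for c
    using powi_double_ne_1[OF t not_root_of_unity, of "w c - w a"] by auto
  then have "qsupp h = {c \<in> qsupp f. w c \<noteq> w a}"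
    by (auto simp: qsupp_def h_def)
  ultimately show thesis using that by (simp add: w_def)
qed

lemma ideal_obtain_smaller_support:
  assumes f: "f \<in> I" "f \<in> qaffine k" and a: "a \<in> qsupp f" "a' \<in> qsupp f" "a \<noteq> a'"
  obtains g where "g \<in> I" "qsupp g \<subseteq> qsupp f - {a}" "a' \<in> qsupp g"
proof -
  define d where "d = (\<lambda>j. a' j - a j)"
  have "aff_exp k a" "aff_exp k a'" using f(2) a by (auto simp: qaffine_iff)
  then have "\<forall>j\<ge>k. d j = 0" by (simp add: aff_exp_def d_def)
  moreover have "d \<noteq> (\<lambda>j. 0)"
  proof
    assume "d = (\<lambda>j. 0)"
    then have "a' = a" by (simp add: d_def fun_eq_iff)
    with a(3) show False by simp
  qed
  ultimately have separated:
    "(\<exists>b\<in>kerB m n B. (\<Sum>j<n. b j * d j) \<noteq> 0) \<or> (\<exists>i<k. (\<Sum>j<n. L i j * d j) \<noteq> 0)"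
    by (rule super_toric_separates[OF skew super_toric k_le_n])
  have sum_d: "(\<Sum>j<n. v j * d j) \<noteq> 0 \<longleftrightarrow> (\<Sum>j<n. v j * a' j) \<noteq> (\<Sum>j<n. v j * a j)" for v
    by (simp add: d_def right_diff_distrib sum_subtractf)
  note goal = that
  have finish: thesis
    if "g \<in> I" "qsupp g = {c \<in> qsupp f. \<phi> c \<noteq> \<phi> a}" "\<phi> a' \<noteq> \<phi> a" for g and \<phi> :: "expo \<Rightarrow> int"
    using goal[of g] that a(2) by auto
  show thesis
  proof (cases "\<exists>b\<in>kerB m n B. (\<Sum>j<n. b j * d j) \<noteq> 0")
    case True
    then obtain b where b: "b \<in> kerB m n B" "(\<Sum>j<n. b j * a' j) \<noteq> (\<Sum>j<n. b j * a j)"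
      using sum_d by blast
    obtain g where "g \<in> I" "qsupp g = {c \<in> qsupp f. (\<Sum>i<n. b i * c i) \<noteq> (\<Sum>i<n. b i * a i)}"
      using torus_invariant_isolate[OF ideal torus_inv b(1) f(1)] .
    then show thesis using finish[where \<phi> = "\<lambda>c. \<Sum>i<n. b i * c i"] b(2) by simp
  next
    case False
    then obtain i where i: "i < k" "(\<Sum>j<n. L i j * a' j) \<noteq> (\<Sum>j<n. L i j * a j)"
      using separated sum_d by blast
    have "f \<in> qaffine n" using f(2) qaffine_mono[OF k_le_n] by blast
    then obtain g where "g \<in> I" "qsupp g = {c \<in> qsupp f. (\<Sum>j<n. L i j * c j) \<noteq> (\<Sum>j<n. L i j * a j)}"
      using commutator_isolate[OF i(1) f(1)] by blast
    then show thesis using finish[where \<phi> = "\<lambda>c. \<Sum>j<n. L i j * c j"] i(2) by simp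
  qed
qed

lemma mem_ideal_qaffine_eq_qzero: "f \<in> I \<Longrightarrow> f \<in> qaffine k \<Longrightarrow> f = qzero"
proof (induction "card (qsupp f)" arbitrary: f rule: less_induct)
  case less
  show ?case
  proof (rule ccontr)
    assume "f \<noteq> qzero"
    then obtain a where a: "a \<in> qsupp f" by (auto simp: qsupp_def qzero_def fun_eq_iff)
    have "qsupp f \<noteq> {a}"
    proof
      assume supp: "qsupp f = {a}"
      have "mon a = qscale (inverse (f a)) f"
      proof
        fix c
        show "mon a c = qscale (inverse (f a)) f c"
          using supp a by (cases "c = a") (auto simp: qscale_def mon_def qsupp_def field_simps)
      qed
      then have "mon a \<in> I" using ideal_qca_qscale[OF ideal less.prems(1)] by simp
      moreover have "aff_exp k a" using less.prems(2) a by (simp add: qaffine_iff)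
      ultimately show False by (simp add: mon_notin_ideal)
    qed
    then obtain a' where "a' \<in> qsupp f" "a \<noteq> a'" using a by blast
    then obtain g where g: "g \<in> I" "qsupp g \<subseteq> qsupp f - {a}" "a' \<in> qsupp g"
      using ideal_obtain_smaller_support[OF less.prems a] by blast
    have "finite (qsupp f)" using less.prems(2) by (simp add: qaffine_iff)
    moreover have "qsupp g \<subset> qsupp f" using g(2) a by blast
    ultimately have "card (qsupp g) < card (qsupp f)" by (rule psubset_card_mono)
    moreover have "g \<in> qaffine k" using qsupp_subset_in_qaffine[OF less.prems(2)] g(2) by blast
    ultimately have "g = qzero" using less.hyps g(1) by simp
    with g(3) show False by (simp add: qsupp_def qzero_def)
  qed
qed

lemma ideal_Int_qaffine_eq_ideal_gen:
  assumes gens: "xvar ` {k..<n} \<subseteq> I"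
  shows "I \<inter> qaffine n = ideal_gen n L t (qaffine n) (xvar ` {k..<n})"
proof
  have I0: "is_ideal n L t (qaffine n) (I \<inter> qaffine n)" by (rule ideal_Int_qaffine[OF t ideal])
  moreover have gens0: "xvar ` {k..<n} \<subseteq> I \<inter> qaffine n" using gens xvar_in_qaffine by auto
  ultimately show "ideal_gen n L t (qaffine n) (xvar ` {k..<n}) \<subseteq> I \<inter> qaffine n"
    by (rule ideal_gen_least)
  show "I \<inter> qaffine n \<subseteq> ideal_gen n L t (qaffine n) (xvar ` {k..<n})"
  proof
    fix f assume f: "f \<in> I \<inter> qaffine n"
    define f0 where "f0 = (\<lambda>c. if aff_exp k c then f c else 0)"
    define f1 where "f1 = (\<lambda>c. if aff_exp k c then 0 else f c)"
    have "f1 = (\<lambda>c. if c \<in> - Collect (aff_exp k) then f c else 0)" by (auto simp: f1_def)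
    then have "f1 \<in> qaffine n" using f restrict_in_qaffine by (metis IntD2)
    moreover have "\<forall>a\<in>qsupp f1. \<not> aff_exp k a" by (simp add: f1_def qsupp_def)
    ultimately have f1: "f1 \<in> qaffine n" "\<forall>a\<in>qsupp f1. \<not> aff_exp k a" by blast+
    then have "f1 \<in> I" using divisible_poly_mem_ideal[OF I0 gens0 t] by blast
    have "f0 = qadd f (qscale (- 1) f1)" by (auto simp: qadd_def qscale_def f0_def f1_def)
    then have "f0 \<in> I" using f \<open>f1 \<in> I\<close> ideal_qadd[OF ideal] ideal_qca_qscale[OF ideal] by simp
    moreover have "f0 \<in> qaffine k" unfolding f0_def using restrict_aff_exp_in_qaffine f by blast
    ultimately have "f0 = qzero" by (rule mem_ideal_qaffine_eq_qzero)
    then have "f = f1" unfolding fun_eq_iff f0_def f1_def qzero_def by metis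
    then show "f \<in> ideal_gen n L t (qaffine n) (xvar ` {k..<n})"
      using divisible_poly_mem_ideal[OF _ _ t f1] by (intro mem_ideal_genI) simp
  qed
qed

end

theorem mainTheorem3:
  fixes m n k :: nat and B L :: imat and t :: complex and I :: "qelt set"
  assumes "compatible m n B L"
    and "t \<noteq> 0" and "\<forall>N::nat. 0 < N \<longrightarrow> (t ^ 2) ^ N \<noteq> 1"
    and "\<forall>P. prime_ideal n L t (qca m n B L t) P \<longrightarrow> completely_prime n L t (qca m n B L t) P"
    and "super_toric m n B L"
    and "prime_ideal n L t (qca m n B L t) I"
    and "torus_invariant m n B I"
    and "I \<noteq> {qzero}"
    and "k \<le> n"
    and "\<forall>i<n. (xvar i \<in> I \<longleftrightarrow> k \<le> i)"
  shows "I \<inter> qaffine n = ideal_gen n L t (qaffine n) (xvar ` {k..<n})"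
proof -
  have skew: "\<forall>i<n. \<forall>j<n. L i j = - L j i" using assms(1) unfolding compatible_def by blast
  have ideal: "is_ideal n L t (qca m n B L t) I" and proper: "I \<noteq> qca m n B L t"
    using assms(6) unfolding prime_ideal_def by blast+
  have "completely_prime n L t (qca m n B L t) I" using assms(4,6) by blast
  then have prime: "\<forall>a\<in>qca m n B L t. \<forall>b\<in>qca m n B L t. qmult n L t a b \<in> I \<longrightarrow> a \<in> I \<or> b \<in> I"
    unfolding completely_prime_def by blast
  have "\<forall>i<k. xvar i \<notin> I" and "xvar ` {k..<n} \<subseteq> I" using assms(9,10) by auto
  then show ?thesis
    using ideal_Int_qaffine_eq_ideal_gen[OF assms(2,3) ideal proper prime assms(9) _ skew assms(5,7)]
    by blast
qed

end
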